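(* Let $\rho$ be a growth function and $m\ge2$ an integer. Let $\sigma=(\sigma_1,\dots,\sigma_m)\in\{-1,1\}^m$ with $\sigma_i=-1$ and $\sigma_{i+1}=1$ for some $1\le i\le m-1$, and let $\phi\in\{-1,1\}^m$ be given by $\phi_i=1$, $\phi_{i+1}=-1$, and $\phi_j=\sigma_j$ for $j\notin\{i,i+1\}$. If $f^\rho_\sigma=(a_\sigma,b_\sigma)$ and $f^\rho_\phi=(a_\phi,b_\phi)$, then $a_\sigma\le a_\phi$ and $b_\sigma=b_\phi$.
   Context: A growth function is an increasing $\rho:\mathbb{R}\to\mathbb{R}^{\ge0}$. Binary strings are elements of $\{-1,1\}^m$ (the empty string $<>$ for $m=0$); $\sigma\wedge u$ denotes concatenation. $f^\rho_\sigma\in\mathbb{R}^2$ is defined recursively: $f^\rho_{<>}=(0,0)$, and if $f^\rho_\sigma=(a,b)$ then $f^\rho_{\sigma\wedge1}=(a+1,b+1)$ and $f^\rho_{\sigma\wedge-1}=(a+\rho(a+b),b-1)$. *)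

theory Defs
  imports Complex_Main
begin

definition growth_function :: "(real \<Rightarrow> real) \<Rightarrow> bool" where
  "growth_function \<rho> \<longleftrightarrow> mono \<rho> \<and> (\<forall>x. 0 \<le> \<rho> x)"

definition f_step :: "(real \<Rightarrow> real) \<Rightarrow> real \<times> real \<Rightarrow> int \<Rightarrow> real \<times> real" where
  "f_step \<rho> p u = (case p of (a, b) \<Rightarrow>
      if u = 1 then (a + 1, b + 1) else (a + \<rho> (a + b), b - 1))"

definition f_rho :: "(real \<Rightarrow> real) \<Rightarrow> int list \<Rightarrow> real \<times> real" where
  "f_rho \<rho> \<sigma> = foldl (f_step \<rho>) (0, 0) \<sigma>"

end

theory Submission
  imports Defs
begin

text \<open>Both orders of a step down and a step up end with the same second coordinate; the
  first coordinate gains \<open>\<rho>\<close> evaluated at \<open>a + b\<close> resp. \<open>a + b + 2\<close>, so the up-first order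
  is ahead. Since \<open>\<rho>\<close> is increasing, an advantage in the first coordinate at equal second
  coordinate persists through any common suffix.\<close>

lemma foldl_f_step_mono_fst:
  assumes "mono \<rho>" and "a \<le> a'"
  shows "fst (foldl (f_step \<rho>) (a, b) zs) \<le> fst (foldl (f_step \<rho>) (a', b) zs)
       \<and> snd (foldl (f_step \<rho>) (a, b) zs) = snd (foldl (f_step \<rho>) (a', b) zs)"
  using assms(2)
proof (induction zs arbitrary: a a' b)
  case Nil
  then show ?case by simp
next
  case (Cons z zs)
  have "\<rho> (a + b) \<le> \<rho> (a' + b)"
    using assms(1) Cons.prems by (simp add: monoD)
  then show ?case
    using Cons by (auto simp: f_step_def)
qed

lemma f_step_down_up_le_up_down:
  assumes "mono \<rho>"
  obtains a a' b where
    "foldl (f_step \<rho>) p [-1, 1] = (a, b)" and "foldl (f_step \<rho>) p [1, -1] = (a', b)"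
    and "a \<le> a'"
proof -
  obtain a b where p: "p = (a, b)" by fastforce
  have "\<rho> (a + b) \<le> \<rho> (a + 1 + (b + 1))"
    using assms by (simp add: monoD)
  then show thesis
    using that[of "a + \<rho> (a + b) + 1" b "a + 1 + \<rho> (a + 1 + (b + 1))"]
    by (simp add: p f_step_def)
qed

lemma f_rho_swap_down_up:
  assumes "mono \<rho>"
  shows "fst (f_rho \<rho> (P @ [-1, 1] @ S)) \<le> fst (f_rho \<rho> (P @ [1, -1] @ S))
       \<and> snd (f_rho \<rho> (P @ [-1, 1] @ S)) = snd (f_rho \<rho> (P @ [1, -1] @ S))"
proof -
  obtain a a' b where
    "foldl (f_step \<rho>) (f_rho \<rho> P) [-1, 1] = (a, b)"
    "foldl (f_step \<rho>) (f_rho \<rho> P) [1, -1] = (a', b)" "a \<le> a'"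
    using f_step_down_up_le_up_down[OF assms] .
  moreover have "f_rho \<rho> (P @ zs @ S) = foldl (f_step \<rho>) (foldl (f_step \<rho>) (f_rho \<rho> P) zs) S"
    for zs
    by (simp only: f_rho_def foldl_append)
  ultimately show ?thesis
    using foldl_f_step_mono_fst[OF assms \<open>a \<le> a'\<close>, of b S] by (simp only:)
qed

lemma list_eq_take_two_drop:
  assumes "length ys = length xs" and "Suc k < length xs"
    and "\<forall>j<length xs. j \<noteq> k \<and> j \<noteq> Suc k \<longrightarrow> ys ! j = xs ! j"
  shows "ys = take k xs @ [ys ! k, ys ! Suc k] @ drop (Suc (Suc k)) xs"
proof (rule nth_equalityI)
  fix j
  assume "j < length ys"
  moreover have "j = Suc (Suc (j - 2))" if "\<not> j \<le> Suc k"
    using that by arith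
  ultimately show "ys ! j = (take k xs @ [ys ! k, ys ! Suc k] @ drop (Suc (Suc k)) xs) ! j"
    using assms by (cases "j = Suc k") (auto simp: nth_append min_def nth_Cons')
qed (use assms in simp)

theorem mainTheorem16:
  fixes \<rho> :: "real \<Rightarrow> real" and m i :: nat and \<sigma> \<phi> :: "int list"
  assumes "growth_function \<rho>"
    and "m \<ge> 2"
    and "length \<sigma> = m" and "set \<sigma> \<subseteq> {-1, 1}"
    and "1 \<le> i" and "i \<le> m - 1"
    and "\<sigma> ! (i - 1) = -1" and "\<sigma> ! i = 1"
    and "length \<phi> = m"
    and "\<phi> ! (i - 1) = 1" and "\<phi> ! i = -1"
    and "\<forall>j. 1 \<le> j \<and> j \<le> m \<and> j \<notin> {i, i + 1} \<longrightarrow> \<phi> ! (j - 1) = \<sigma> ! (j - 1)"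
  shows "fst (f_rho \<rho> \<sigma>) \<le> fst (f_rho \<rho> \<phi>) \<and> snd (f_rho \<rho> \<sigma>) = snd (f_rho \<rho> \<phi>)"
proof -
  define k where "k = i - 1"
  have i: "i = Suc k" and k: "Suc k < m"
    using assms(2,5,6) by (auto simp: k_def)
  have agree: "\<forall>j<m. j \<noteq> k \<and> j \<noteq> Suc k \<longrightarrow> \<phi> ! j = \<sigma> ! j"
  proof (intro allI impI)
    fix j
    assume "j < m" and "j \<noteq> k \<and> j \<noteq> Suc k"
    then show "\<phi> ! j = \<sigma> ! j"
      using assms(12)[rule_format, of "Suc j"] i by auto
  qed
  have "\<sigma> = take k \<sigma> @ [-1, 1] @ drop (Suc (Suc k)) \<sigma>"
    using list_eq_take_two_drop[of \<sigma> \<sigma> k] assms(3,7,8) i k by simp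
  moreover have "\<phi> = take k \<sigma> @ [1, -1] @ drop (Suc (Suc k)) \<sigma>"
    using list_eq_take_two_drop[of \<phi> \<sigma> k] assms(3,9,10,11) i k agree by simp
  moreover have "mono \<rho>"
    using assms(1) by (simp add: growth_function_def)
  ultimately show ?thesis
    by (metis f_rho_swap_down_up)
qed

end
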